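(* Let $\mathfrak g$ be of type $A_n$, $B_n$ or $D_n$, $i\in I$ and $b\in\mathcal B(\infty)$, and let $\sigma_i^\ast(b)=\max\{\Sigma^\ast_\tau(b):\tau\in\Pi_i^\ast\}$. If $\sigma_i^\ast(b)=\Sigma^\ast_\lambda(b)=\Sigma^\ast_\mu(b)$ for some $\lambda,\mu\in\Pi_i^\ast$, then $\sigma_i^\ast(b)=\Sigma^\ast_{\lambda\cup\mu}(b)=\Sigma^\ast_{\lambda\cap\mu}(b)$.
   Context: $I=\{1,\dots,n\}$, Cartan integers $a_{ij}$: $a_{ii}=2$; for $i\ne j$: type $A_n$: $a_{ij}=-1$ if $|i-j|=1$, else $0$; type $B_n$: same but $a_{n,n-1}=-2$; type $D_n$ ($n\ge4$): $a_{ij}=-1$ iff $\{i,j\}=\{k,k+1\}$, $k\le n-2$, or $\{i,j\}=\{n-2,n\}$, else $0$. Index sets $\mathcal I^A=\{(s,t):s+t\le n+1\}$, $\mathcal I^B=\{(s,t):1\le s\le n\}$, $\mathcal I^D=\{(s,t):1\le s\le n-1\}$ ($s\ge1$, $t\in I$). $\mathcal B(\infty)\subset\mathbb Z_{\ge0}^{\mathcal I}$ is the polyhedral realization of $B(\infty)$ for the sequence $(\dots,n,\dots,1,n,\dots,1)$ (explicitly: type $A$: $b_{1,k}\ge b_{2,k-1}\ge\dots\ge b_{k,1}$, $1\le k\le n$; types $B,D$: analogous known inequalities); only the following is needed. Convention $b_{s,t}=0$ for $(s,t)\notin\mathcal I$. $\partial^\ast_{s,t}(b)=b_{s-1,t}+\sum_{k>t}a_{tk}b_{s-1,k}+\sum_{k<t}a_{tk}b_{s,k}+b_{s,t}$.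 Tableaux $T_i^\ast$: for $i\le n$ (type $A$), $i\le n-1$ (type $B$), $i\le n-2$ (type $D$), shape $(i)$ with $T_i^\ast(1,t)=\partial^\ast_{t,i+1-t}$; type $B_n$: $T_n^\ast$ of shape $(n,n-1,\dots,1)$ with $T_n^\ast(s,t)=2\partial^\ast_{s+t-1,n-t}$ ($t\ge2$), $T_n^\ast(s,1)=\partial^\ast_{s,n}$; type $D_n$: $T_{n-1}^\ast,T_n^\ast$ of shape $(n-1,\dots,1)$ with $T(s,t)=\partial^\ast_{s+t-1,n-t}$ ($t\ge2$), $T^\ast_{n-1}(s,1)=\partial^\ast_{s,n-1}$ for odd $s$ and $\partial^\ast_{s,n}$ for even $s$, $T_n^\ast(s,1)$ the same with $n-1,n$ swapped. $\Pi_i^\ast$: nonempty strict partitions with diagram contained in the shape of $T_i^\ast$. $\Sigma^\ast_\lambda(b)=\sum_{(s,t)\in\lambda}T_i^\ast(s,t)(b)$. For partitions, $\lambda\cup\mu=(\max(\lambda_k,\mu_k))_k$, $\lambda\cap\mu=(\min(\lambda_k,\mu_k))_k$. *)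

theory Defs
  imports Main
begin

datatype lie_type = TypeA | TypeB | TypeD

definition valid_rank :: "lie_type \<Rightarrow> nat \<Rightarrow> bool" where
  "valid_rank ty n = (case ty of TypeD \<Rightarrow> 4 \<le> n | _ \<Rightarrow> 1 \<le> n)"

definition cartan :: "lie_type \<Rightarrow> nat \<Rightarrow> nat \<Rightarrow> nat \<Rightarrow> int" where
  "cartan ty n i j =
    (if i = j then 2 else
     (case ty of
        TypeA \<Rightarrow> (if i + 1 = j \<or> j + 1 = i then -1 else 0)
      | TypeB \<Rightarrow> (if i = n \<and> j + 1 = n then -2
                  else if i + 1 = j \<or> j + 1 = i then -1 else 0)
      | TypeD \<Rightarrow> (if ({i, j} = {n - 2, n}) \<or>
                     (\<exists>k. 1 \<le> k \<and> k \<le> n - 2 \<and> {i, j} = {k, k + 1})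
                  then -1 else 0)))"

definition in_idx :: "lie_type \<Rightarrow> nat \<Rightarrow> nat \<times> nat \<Rightarrow> bool" where
  "in_idx ty n st = (case st of (s, t) \<Rightarrow>
      1 \<le> s \<and> 1 \<le> t \<and> t \<le> n \<and>
      (case ty of TypeA \<Rightarrow> s + t \<le> n + 1 | TypeB \<Rightarrow> s \<le> n | TypeD \<Rightarrow> s \<le> n - 1))"

definition bval :: "lie_type \<Rightarrow> nat \<Rightarrow> (nat \<Rightarrow> nat \<Rightarrow> int) \<Rightarrow> nat \<Rightarrow> nat \<Rightarrow> int" where
  "bval ty n b s t = (if in_idx ty n (s, t) then b s t else 0)"

definition pstar :: "lie_type \<Rightarrow> nat \<Rightarrow> nat \<Rightarrow> nat \<Rightarrow> (nat \<Rightarrow> nat \<Rightarrow> int) \<Rightarrow> int" where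
  "pstar ty n s t b =
     bval ty n b (s - 1) t
     + (\<Sum>k\<in>{t<..n}. cartan ty n t k * bval ty n b (s - 1) k)
     + (\<Sum>k\<in>{1..<t}. cartan ty n t k * bval ty n b s k)
     + bval ty n b s t"

text \<open>Entries T*_i(s,t) of the tableaux (rows s, columns t, 1-indexed).\<close>
definition Tstar :: "lie_type \<Rightarrow> nat \<Rightarrow> nat \<Rightarrow> nat \<Rightarrow> nat \<Rightarrow> (nat \<Rightarrow> nat \<Rightarrow> int) \<Rightarrow> int" where
  "Tstar ty n i s t b =
    (if ty = TypeA \<or> (ty = TypeB \<and> i \<le> n - 1) \<or> (ty = TypeD \<and> i \<le> n - 2)
     then pstar ty n t (i + 1 - t) b
     else if ty = TypeB then
       (if 2 \<le> t then 2 * pstar ty n (s + t - 1) (n - t) b else pstar ty n s n b)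
     else
       (if 2 \<le> t then pstar ty n (s + t - 1) (n - t) b
        else if (odd s \<longleftrightarrow> i = n - 1) then pstar ty n s (n - 1) b
        else pstar ty n s n b))"

text \<open>Partitions as lists of (positive) parts; row s (1-indexed) has length \<lambda>!(s-1).\<close>
definition part :: "nat list \<Rightarrow> nat \<Rightarrow> nat" where
  "part la k = (if k < length la then la ! k else 0)"

definition strict_partition :: "nat list \<Rightarrow> bool" where
  "strict_partition la = (sorted_wrt (>) la \<and> (\<forall>x\<in>set la. 0 < x))"

definition cells :: "nat list \<Rightarrow> (nat \<times> nat) set" where
  "cells la = {(s, t). 1 \<le> s \<and> s \<le> length la \<and> 1 \<le> t \<and> t \<le> la ! (s - 1)}"

definition part_union :: "nat list \<Rightarrow> nat list \<Rightarrow> nat list" where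
  "part_union la mu = map (\<lambda>k. max (part la k) (part mu k)) [0..<max (length la) (length mu)]"

definition part_inter :: "nat list \<Rightarrow> nat list \<Rightarrow> nat list" where
  "part_inter la mu = map (\<lambda>k. min (part la k) (part mu k)) [0..<min (length la) (length mu)]"

definition shape :: "lie_type \<Rightarrow> nat \<Rightarrow> nat \<Rightarrow> nat list" where
  "shape ty n i =
    (if ty = TypeA \<or> (ty = TypeB \<and> i \<le> n - 1) \<or> (ty = TypeD \<and> i \<le> n - 2) then [i]
     else if ty = TypeB then rev [1..<n + 1]
     else rev [1..<n])"

definition Pi_star :: "lie_type \<Rightarrow> nat \<Rightarrow> nat \<Rightarrow> nat list set" where
  "Pi_star ty n i = {la. la \<noteq> [] \<and> strict_partition la \<and> cells la \<subseteq> cells (shape ty n i)}"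

definition Sigma_star :: "lie_type \<Rightarrow> nat \<Rightarrow> nat \<Rightarrow> nat list \<Rightarrow> (nat \<Rightarrow> nat \<Rightarrow> int) \<Rightarrow> int" where
  "Sigma_star ty n i la b = (\<Sum>(s, t)\<in>cells la. Tstar ty n i s t b)"

definition sigma_star :: "lie_type \<Rightarrow> nat \<Rightarrow> nat \<Rightarrow> (nat \<Rightarrow> nat \<Rightarrow> int) \<Rightarrow> int" where
  "sigma_star ty n i b = Max ((\<lambda>\<tau>. Sigma_star ty n i \<tau> b) ` Pi_star ty n i)"

end

theory Submission
  imports Defs
begin

text \<open>The function \<open>\<lambda> \<mapsto> \<Sigma>\<^sup>*\<^sub>\<lambda>(b)\<close> is a sum over the cells of \<open>\<lambda>\<close>, and the cells of
  \<open>\<lambda> \<union> \<mu>\<close> and \<open>\<lambda> \<inter> \<mu>\<close> are the union and intersection of those of \<open>\<lambda>\<close> and \<open>\<mu>\<close>.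
  Hence \<open>\<Sigma>\<^sup>*\<^sub>\<lambda>\<^sub>\<union>\<^sub>\<mu> + \<Sigma>\<^sup>*\<^sub>\<lambda>\<^sub>\<inter>\<^sub>\<mu> = \<Sigma>\<^sup>*\<^sub>\<lambda> + \<Sigma>\<^sup>*\<^sub>\<mu>\<close>. Since \<open>\<Pi>\<^sup>*\<^sub>i\<close> is closed under
  \<open>\<union>\<close> and \<open>\<inter>\<close>, both terms on the left are at most \<open>\<sigma>\<^sup>*\<^sub>i(b)\<close>, while the right-hand
  side equals \<open>2 \<sigma>\<^sup>*\<^sub>i(b)\<close>; so both are equal to \<open>\<sigma>\<^sup>*\<^sub>i(b)\<close>.\<close>

lemma cells_eq_part: "cells la = {(s, t). 1 \<le> s \<and> 1 \<le> t \<and> t \<le> part la (s - 1)}"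
  unfolding cells_def part_def by (auto split: if_splits)

lemma finite_cells: "finite (cells la)"
proof -
  have "cells la = (SIGMA s:{1..length la}. {1..la ! (s - 1)})"
    unfolding cells_def by auto
  then show ?thesis by simp
qed

lemma cells_part_union: "cells (part_union la mu) = cells la \<union> cells mu"
  unfolding cells_eq_part by (auto simp: part_union_def part_def split: if_splits)

lemma cells_part_inter: "cells (part_inter la mu) = cells la \<inter> cells mu"
  unfolding cells_eq_part by (auto simp: part_inter_def part_def split: if_splits)

lemma sum_cells_part_union_inter:
  "(\<Sum>c\<in>cells (part_union la mu). g c) + (\<Sum>c\<in>cells (part_inter la mu). g c)
     = (\<Sum>c\<in>cells la. g c) + (\<Sum>c\<in>cells mu. g c)"
  unfolding cells_part_union cells_part_inter
  by (rule sum.union_inter) (simp_all add: finite_cells)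

lemma strict_partition_part_pos:
  "strict_partition la \<Longrightarrow> k < length la \<Longrightarrow> 0 < part la k"
  unfolding strict_partition_def part_def by auto

lemma strict_partition_part_less:
  "strict_partition la \<Longrightarrow> i < j \<Longrightarrow> j < length la \<Longrightarrow> part la j < part la i"
  unfolding strict_partition_def part_def by (auto simp: sorted_wrt_iff_nth_less)

lemma part_beyond_length: "length la \<le> k \<Longrightarrow> part la k = 0"
  unfolding part_def by simp

lemma strict_partition_of_parts:
  assumes "\<And>k. k < length la \<Longrightarrow> 0 < la ! k"
    and "\<And>i j. i < j \<Longrightarrow> j < length la \<Longrightarrow> la ! j < la ! i"
  shows "strict_partition la"
  using assms unfolding strict_partition_def
  by (auto simp: sorted_wrt_iff_nth_less in_set_conv_nth)

lemma strict_partition_part_union: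
  assumes la: "strict_partition la" and mu: "strict_partition mu"
  shows "strict_partition (part_union la mu)"
proof -
  have pos: "0 < part la k \<or> 0 < part mu k" if "k < max (length la) (length mu)" for k
    using that strict_partition_part_pos[OF la] strict_partition_part_pos[OF mu]
    by (meson less_max_iff_disj)
  have desc: "part la j < part la i \<or> part la j = 0" "part mu j < part mu i \<or> part mu j = 0"
    if "i < j" for i j
    using strict_partition_part_less[OF la that] strict_partition_part_less[OF mu that]
      part_beyond_length[of la j] part_beyond_length[of mu j]
    by (meson not_le)+
  show ?thesis
  proof (rule strict_partition_of_parts)
    fix k assume "k < length (part_union la mu)"
    then show "0 < part_union la mu ! k"
      using pos by (fastforce simp: part_union_def)
  next
    fix i j assume "i < j" and "j < length (part_union la mu)"
    then show "part_union la mu ! j < part_union la mu ! i"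
      using pos[of j] desc[of i j] by (auto simp: part_union_def)
  qed
qed

lemma strict_partition_part_inter:
  assumes la: "strict_partition la" and mu: "strict_partition mu"
  shows "strict_partition (part_inter la mu)"
proof (rule strict_partition_of_parts)
  fix k assume "k < length (part_inter la mu)"
  then show "0 < part_inter la mu ! k"
    using strict_partition_part_pos[OF la] strict_partition_part_pos[OF mu]
    by (auto simp: part_inter_def)
next
  fix i j assume "i < j" and "j < length (part_inter la mu)"
  then show "part_inter la mu ! j < part_inter la mu ! i"
    using strict_partition_part_less[OF la] strict_partition_part_less[OF mu]
    by (fastforce simp: part_inter_def)
qed

lemma part_union_in_Pi_star:
  "la \<in> Pi_star ty n i \<Longrightarrow> mu \<in> Pi_star ty n i \<Longrightarrow> part_union la mu \<in> Pi_star ty n i"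
  unfolding Pi_star_def using strict_partition_part_union cells_part_union
  by (auto simp: part_union_def)

lemma part_inter_in_Pi_star:
  "la \<in> Pi_star ty n i \<Longrightarrow> mu \<in> Pi_star ty n i \<Longrightarrow> part_inter la mu \<in> Pi_star ty n i"
  unfolding Pi_star_def using strict_partition_part_inter cells_part_inter
  by (auto simp: part_inter_def)

lemma set_subset_snd_cells: "strict_partition la \<Longrightarrow> set la \<subseteq> snd ` cells la"
proof
  fix x assume sp: "strict_partition la" and "x \<in> set la"
  then obtain k where k: "k < length la" "la ! k = x"
    by (auto simp: in_set_conv_nth)
  with sp have "(Suc k, x) \<in> cells la"
    unfolding cells_def strict_partition_def by (auto simp: Suc_le_eq)
  then show "x \<in> snd ` cells la" by force
qed

lemma length_le_if_cells_subset:
  assumes "strict_partition la" and "cells la \<subseteq> cells mu"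
  shows "length la \<le> length mu"
proof (cases "la = []")
  case False
  with assms(1) have "(length la, 1) \<in> cells la"
    unfolding cells_def strict_partition_def by (auto simp: Suc_le_eq)
  with assms(2) show ?thesis unfolding cells_def by auto
qed simp

lemma finite_Pi_star: "finite (Pi_star ty n i)"
proof (rule finite_subset)
  let ?sh = "shape ty n i"
  show "Pi_star ty n i \<subseteq> {xs. set xs \<subseteq> snd ` cells ?sh \<and> length xs \<le> length ?sh}"
    using set_subset_snd_cells length_le_if_cells_subset
    unfolding Pi_star_def by blast
  show "finite {xs. set xs \<subseteq> snd ` cells ?sh \<and> length xs \<le> length ?sh}"
    by (rule finite_lists_length_le) (simp add: finite_cells)
qed

lemma Sigma_star_le_sigma_star:
  "\<tau> \<in> Pi_star ty n i \<Longrightarrow> Sigma_star ty n i \<tau> b \<le> sigma_star ty n i b"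
  unfolding sigma_star_def using finite_Pi_star by (intro Max_ge) auto

theorem lemma3p7:
  fixes ty :: lie_type and n i :: nat and b :: "nat \<Rightarrow> nat \<Rightarrow> int"
    and la mu :: "nat list"
  assumes "valid_rank ty n"
    and "1 \<le> i" and "i \<le> n"
    and "\<forall>s t. in_idx ty n (s, t) \<longrightarrow> 0 \<le> b s t"
    and "la \<in> Pi_star ty n i" and "mu \<in> Pi_star ty n i"
    and "sigma_star ty n i b = Sigma_star ty n i la b"
    and "sigma_star ty n i b = Sigma_star ty n i mu b"
  shows "sigma_star ty n i b = Sigma_star ty n i (part_union la mu) b
       \<and> sigma_star ty n i b = Sigma_star ty n i (part_inter la mu) b"
proof -
  have modular: "Sigma_star ty n i (part_union la mu) b + Sigma_star ty n i (part_inter la mu) b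
      = Sigma_star ty n i la b + Sigma_star ty n i mu b"
    unfolding Sigma_star_def by (rule sum_cells_part_union_inter)
  have "Sigma_star ty n i (part_union la mu) b \<le> sigma_star ty n i b"
    using assms(5,6) by (intro Sigma_star_le_sigma_star part_union_in_Pi_star)
  moreover have "Sigma_star ty n i (part_inter la mu) b \<le> sigma_star ty n i b"
    using assms(5,6) by (intro Sigma_star_le_sigma_star part_inter_in_Pi_star)
  ultimately show ?thesis
    using modular assms(7,8) by linarith
qed

end
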